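(* Let $A$ be a subset of a real Banach space $X$. If $\mathbf E(A)<\infty$, then $A$ is precompact.
   Context: A brick in $X$ is a set $K_{\mathcal B,\mathcal E}=\{x\in X:\ |e_n^*(x)|\le\varepsilon_n\ \forall n\}$, where $\mathcal B=(e_n)$ is a normalized Schauder basis of $X$ with biorthogonal functionals $(e_n^* )$ and $\mathcal E=(\varepsilon_n)$ is a sequence of nonnegative numbers. Its unconditional radius is $r^{\rm unc}(K_{\mathcal B,\mathcal E})=\sup_{\theta_n=\pm1}\|\sum_n\theta_n\varepsilon_ne_n\|$ (norm of a divergent series $=\infty$). The entropy is $\mathbf E(A)=\inf\{r^{\rm unc}(K_{\mathcal B,\mathcal E}): A\subseteq K_{\mathcal B,\mathcal E}\}$, equal to $\infty$ if no brick of finite unconditional radius contains $A$. A set is precompact if for every $\varepsilon>0$ it contains a finite $\varepsilon$-net. *)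

theory Defs
  imports "HOL-Analysis.Analysis"
begin

definition schauder_basis :: "(nat \<Rightarrow> 'a::banach) \<Rightarrow> bool" where
  "schauder_basis e \<longleftrightarrow> (\<forall>x. \<exists>!c::nat \<Rightarrow> real. (\<lambda>n. c n *\<^sub>R e n) sums x)"

definition normalized_schauder_basis :: "(nat \<Rightarrow> 'a::banach) \<Rightarrow> bool" where
  "normalized_schauder_basis e \<longleftrightarrow> schauder_basis e \<and> (\<forall>n. norm (e n) = 1)"

definition coord :: "(nat \<Rightarrow> 'a::banach) \<Rightarrow> nat \<Rightarrow> 'a \<Rightarrow> real" where
  "coord e n x = (THE c::nat \<Rightarrow> real. (\<lambda>k. c k *\<^sub>R e k) sums x) n"

definition brick :: "(nat \<Rightarrow> 'a::banach) \<Rightarrow> (nat \<Rightarrow> real) \<Rightarrow> 'a set" where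
  "brick e \<epsilon> = {x. \<forall>n. \<bar>coord e n x\<bar> \<le> \<epsilon> n}"

definition r_unc :: "(nat \<Rightarrow> 'a::banach) \<Rightarrow> (nat \<Rightarrow> real) \<Rightarrow> ereal" where
  "r_unc e \<epsilon> = (SUP \<theta>\<in>{\<theta>::nat \<Rightarrow> real. \<forall>n. \<theta> n \<in> {-1, 1}}.
      (if summable (\<lambda>n. (\<theta> n * \<epsilon> n) *\<^sub>R e n)
       then ereal (norm (\<Sum>n. (\<theta> n * \<epsilon> n) *\<^sub>R e n)) else \<infinity>))"

text \<open>Entropy: infimum over all bricks (normalized Schauder basis, nonnegative
  sequence) containing A; Inf of the empty set is \<infinity>.\<close>
definition entropy :: "'a::banach set \<Rightarrow> ereal" where
  "entropy A = (INF p\<in>{(e, \<epsilon>). normalized_schauder_basis e \<and> (\<forall>n. 0 \<le> \<epsilon> n)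
                      \<and> A \<subseteq> brick e \<epsilon>}. r_unc (fst p) (snd p))"

definition precompact :: "'a::metric_space set \<Rightarrow> bool" where
  "precompact A \<longleftrightarrow> (\<forall>\<epsilon>>0. \<exists>F. finite F \<and> F \<subseteq> A \<and> A \<subseteq> (\<Union>y\<in>F. cball y \<epsilon>))"

end

theory Submission
  imports Defs
begin

(* A brick of finite unconditional radius makes every sign series sum_n +-eps_n e_n converge.
   A gliding-hump argument upgrades this to tails that are small uniformly in the signs, and
   since the norm is convex and the cube [-1,1]^F is the convex hull of its vertices, uniformly
   in all multipliers |c_n| <= 1. Hence every point of the brick is uniformly close to its N-th
   partial sum, whose coefficients lie in the bounded box of the brick; rounding them to a fine
   grid yields a finite net. *)

lemma norm_add_scaleR_le_max:
  fixes x y :: "'a::real_normed_vector"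
  assumes "\<bar>t\<bar> \<le> 1"
  shows "norm (x + t *\<^sub>R y) \<le> max (norm (x + y)) (norm (x - y))"
proof -
  define a b where "a = (1 + t) / 2" and "b = (1 - t) / 2"
  have ab: "0 \<le> a" "0 \<le> b" "a + b = 1"
    using assms by (auto simp: a_def b_def field_simps)
  have "a *\<^sub>R (x + y) + b *\<^sub>R (x - y) = (a + b) *\<^sub>R x + (a - b) *\<^sub>R y"
    by (simp add: algebra_simps)
  also have "\<dots> = x + t *\<^sub>R y"
    by (simp add: ab(3)) (simp add: a_def b_def field_simps)
  finally have "x + t *\<^sub>R y = a *\<^sub>R (x + y) + b *\<^sub>R (x - y)" ..
  then have "norm (x + t *\<^sub>R y) \<le> a * norm (x + y) + b * norm (x - y)"
    using ab by (metis abs_of_nonneg norm_scaleR norm_triangle_ineq)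
  also have "\<dots> \<le> a * max (norm (x + y)) (norm (x - y)) + b * max (norm (x + y)) (norm (x - y))"
    using ab by (intro add_mono mult_left_mono) auto
  also have "\<dots> = max (norm (x + y)) (norm (x - y))"
    by (simp add: ab(3) flip: distrib_right)
  finally show ?thesis .
qed

lemma exists_signs_norm_sum_ge:
  fixes v :: "nat \<Rightarrow> 'a::real_normed_vector"
  assumes "finite F" "\<And>n. n \<in> F \<Longrightarrow> \<bar>c n\<bar> \<le> 1"
  shows "\<exists>\<theta>. (\<forall>n. \<theta> n \<in> {-1, 1}) \<and>
           norm ((\<Sum>n\<in>F. c n *\<^sub>R v n) + w) \<le> norm ((\<Sum>n\<in>F. \<theta> n *\<^sub>R v n) + w)"
  using assms
proof (induction F arbitrary: w rule: finite_induct)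
  case empty
  show ?case by (rule exI[of _ "\<lambda>_. 1"]) auto
next
  case (insert m F)
  define S where "S = (\<Sum>n\<in>F. c n *\<^sub>R v n)"
  obtain s :: real where s: "s \<in> {-1, 1}" "norm (S + c m *\<^sub>R v m + w) \<le> norm (S + (s *\<^sub>R v m + w))"
  proof -
    have "norm ((S + w) + c m *\<^sub>R v m) \<le> max (norm ((S + w) + v m)) (norm ((S + w) - v m))"
      using insert.prems by (intro norm_add_scaleR_le_max) auto
    then show thesis
      by (intro that[of "if norm (S + w - v m) \<le> norm (S + w + v m) then 1 else -1"])
         (auto simp: algebra_simps)
  qed
  obtain \<theta> where \<theta>: "\<forall>n. \<theta> n \<in> {-1, 1}"
    and le: "norm (S + (s *\<^sub>R v m + w)) \<le> norm ((\<Sum>n\<in>F. \<theta> n *\<^sub>R v n) + (s *\<^sub>R v m + w))"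
    using insert.IH[of "s *\<^sub>R v m + w"] insert.prems unfolding S_def by auto
  have "(\<Sum>n\<in>insert m F. (\<theta>(m := s)) n *\<^sub>R v n) = s *\<^sub>R v m + (\<Sum>n\<in>F. \<theta> n *\<^sub>R v n)"
    using insert.hyps by (auto intro!: sum.cong)
  then show ?case
    using insert.hyps s \<theta> le
    by (intro exI[of _ "\<theta>(m := s)"]) (auto simp: S_def algebra_simps)
qed

lemma Least_Suc_strict_mono_eq:
  assumes "strict_mono b" and "b j \<le> n" and "n < b (Suc j)"
  shows "(LEAST i. n < b (Suc i)) = j"
proof (rule Least_equality)
  show "j \<le> i" if "n < b (Suc i)" for i
  proof (rule ccontr)
    assume "\<not> j \<le> i"
    then have "b (Suc i) \<le> b j"
      using strict_mono_less_eq[OF \<open>strict_mono b\<close>] by simp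
    with assms(2) \<open>n < b (Suc i)\<close> show False
      by simp
  qed
qed (fact assms(3))

lemma uniformly_Cauchy_sign_series:
  fixes v :: "nat \<Rightarrow> 'a::banach"
  assumes summable: "\<And>\<theta>. (\<forall>n. \<theta> n \<in> {-1, 1}) \<Longrightarrow> summable (\<lambda>n. \<theta> n *\<^sub>R v n)"
    and "\<delta> > 0"
  shows "\<exists>N. \<forall>m\<ge>N. \<forall>n \<theta>. (\<forall>k. \<theta> k \<in> {-1, 1}) \<longrightarrow> norm (\<Sum>k\<in>{m..<n}. \<theta> k *\<^sub>R v k) < \<delta>"
proof (rule ccontr)
  assume "\<not> ?thesis"
  then have "\<forall>N. \<exists>m l \<theta>. N \<le> m \<and> (\<forall>k. \<theta> k \<in> {-1, 1}) \<and>
               \<delta> \<le> norm (\<Sum>k\<in>{m..<l}. \<theta> k *\<^sub>R v k)"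
    by (auto simp: not_less)
  then obtain M L T where M: "\<And>N. N \<le> M N" and T: "\<And>N k. T N k \<in> {-1, 1}"
    and hump: "\<And>N. \<delta> \<le> norm (\<Sum>k\<in>{M N..<L N}. T N k *\<^sub>R v k)"
    by metis
  have M_less_L: "M N < L N" for N
    using hump[of N] \<open>\<delta> > 0\<close> by (cases "M N < L N") auto
  define b where "b = rec_nat 0 (\<lambda>_ j. L j)"
  have b_Suc: "b (Suc j) = L (b j)" for j
    by (simp add: b_def)
  have "strict_mono b"
    unfolding strict_mono_Suc_iff b_Suc using M M_less_L by (metis le_less_trans)
  define block where "block n = (LEAST j. n < b (Suc j))" for n
  have block: "block n = j" if "b j \<le> n" "n < b (Suc j)" for n j
    unfolding block_def using \<open>strict_mono b\<close> that by (rule Least_Suc_strict_mono_eq)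
  text \<open>Glue the humps over the disjoint blocks \<open>[b j, b (j + 1))\<close> into one sign sequence.\<close>
  define \<theta> where "\<theta> n = T (b (block n)) n" for n
  have "summable (\<lambda>n. \<theta> n *\<^sub>R v n)"
    using T by (intro summable) (simp add: \<theta>_def)
  then obtain N where N: "\<And>m n. N \<le> m \<Longrightarrow> norm (\<Sum>k\<in>{m..<n}. \<theta> k *\<^sub>R v k) < \<delta>"
    unfolding summable_Cauchy using \<open>\<delta> > 0\<close> by blast
  have "N \<le> M (b N)"
    using seq_suble[OF \<open>strict_mono b\<close>, of N] M[of "b N"] by linarith
  moreover have "(\<Sum>k\<in>{M (b N)..<L (b N)}. \<theta> k *\<^sub>R v k) = (\<Sum>k\<in>{M (b N)..<L (b N)}. T (b N) k *\<^sub>R v k)"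
  proof (rule sum.cong)
    fix k assume "k \<in> {M (b N)..<L (b N)}"
    then have "b N \<le> k" "k < b (Suc N)"
      using M[of "b N"] b_Suc by auto
    then show "\<theta> k *\<^sub>R v k = T (b N) k *\<^sub>R v k"
      by (simp add: \<theta>_def block)
  qed simp
  ultimately show False
    using N[of "M (b N)" "L (b N)"] hump[of "b N"] by simp
qed

lemma uniformly_Cauchy_bounded_multiplier_series:
  fixes v :: "nat \<Rightarrow> 'a::banach"
  assumes "\<And>\<theta>. (\<forall>n. \<theta> n \<in> {-1, 1}) \<Longrightarrow> summable (\<lambda>n. \<theta> n *\<^sub>R v n)"
    and "\<delta> > 0"
  shows "\<exists>N. \<forall>m\<ge>N. \<forall>n c. (\<forall>k. \<bar>c k\<bar> \<le> 1) \<longrightarrow> norm (\<Sum>k\<in>{m..<n}. c k *\<^sub>R v k) < \<delta>"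
proof -
  obtain N where N: "\<forall>m\<ge>N. \<forall>n \<theta>. (\<forall>k. \<theta> k \<in> {-1, 1}) \<longrightarrow> norm (\<Sum>k\<in>{m..<n}. \<theta> k *\<^sub>R v k) < \<delta>"
    using uniformly_Cauchy_sign_series[OF assms] by blast
  have "norm (\<Sum>k\<in>{m..<n}. c k *\<^sub>R v k) < \<delta>" if "N \<le> m" and c: "\<forall>k. \<bar>c k\<bar> \<le> 1" for m n c
  proof -
    obtain \<theta> where \<theta>: "\<forall>k. \<theta> k \<in> {-1, 1}"
      and le: "norm ((\<Sum>k\<in>{m..<n}. c k *\<^sub>R v k) + 0) \<le> norm ((\<Sum>k\<in>{m..<n}. \<theta> k *\<^sub>R v k) + 0)"
      using exists_signs_norm_sum_ge[of "{m..<n}" c v 0] c by auto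
    have "norm (\<Sum>k\<in>{m..<n}. \<theta> k *\<^sub>R v k) < \<delta>"
      using N \<open>N \<le> m\<close> \<theta> by blast
    with le show ?thesis
      by simp
  qed
  then show ?thesis by blast
qed

lemma coord_sums:
  assumes "schauder_basis e"
  shows "(\<lambda>n. coord e n x *\<^sub>R e n) sums x"
proof -
  have "\<exists>!c. (\<lambda>n. c n *\<^sub>R e n) sums x"
    using assms unfolding schauder_basis_def by blast
  from theI'[OF this] show ?thesis
    unfolding coord_def .
qed

lemma summable_signs_if_r_unc_finite:
  assumes "r_unc e \<epsilon> < \<infinity>" and "\<forall>n. \<theta> n \<in> {-1, 1}"
  shows "summable (\<lambda>n. (\<theta> n * \<epsilon> n) *\<^sub>R e n)"
proof -
  have "\<theta> \<in> {\<theta>. \<forall>n. \<theta> n \<in> {-1, 1}}"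
    using assms(2) by simp
  then have "(if summable (\<lambda>n. (\<theta> n * \<epsilon> n) *\<^sub>R e n)
         then ereal (norm (\<Sum>n. (\<theta> n * \<epsilon> n) *\<^sub>R e n)) else \<infinity>) \<le> r_unc e \<epsilon>"
    unfolding r_unc_def by (rule SUP_upper)
  with assms(1) show ?thesis
    by (cases "summable (\<lambda>n. (\<theta> n * \<epsilon> n) *\<^sub>R e n)") auto
qed

lemma brick_uniform_tail:
  assumes "schauder_basis e" and "r_unc e \<epsilon> < \<infinity>" and "\<delta> > 0"
  shows "\<exists>N. \<forall>x\<in>brick e \<epsilon>. norm (x - (\<Sum>n<N. coord e n x *\<^sub>R e n)) \<le> \<delta>"
proof -
  have signs_summable: "summable (\<lambda>n. \<theta> n *\<^sub>R (\<epsilon> n *\<^sub>R e n))" if "\<forall>n. \<theta> n \<in> {-1, 1}" for \<theta>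
    using summable_signs_if_r_unc_finite[OF assms(2) that] by simp
  obtain N where N: "\<forall>m\<ge>N. \<forall>n c. (\<forall>k. \<bar>c k\<bar> \<le> 1) \<longrightarrow> norm (\<Sum>k\<in>{m..<n}. c k *\<^sub>R (\<epsilon> k *\<^sub>R e k)) < \<delta>"
    using uniformly_Cauchy_bounded_multiplier_series[OF signs_summable \<open>\<delta> > 0\<close>] by blast
  have "norm (x - (\<Sum>n<N. coord e n x *\<^sub>R e n)) \<le> \<delta>" if "x \<in> brick e \<epsilon>" for x
  proof -
    define c where "c k = (if \<epsilon> k = 0 then 0 else coord e k x / \<epsilon> k)" for k
    have coord_le: "\<bar>coord e k x\<bar> \<le> \<epsilon> k" for k
      using that by (simp add: brick_def)
    have "\<bar>c k\<bar> \<le> 1" for k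
      using coord_le[of k] by (auto simp: c_def abs_divide divide_le_eq)
    then have bound: "norm (\<Sum>k\<in>{N..<m}. c k *\<^sub>R (\<epsilon> k *\<^sub>R e k)) < \<delta>" for m
      using N by blast
    have rescale: "c k *\<^sub>R (\<epsilon> k *\<^sub>R e k) = coord e k x *\<^sub>R e k" for k
      using coord_le[of k] by (auto simp: c_def)
    have tail: "norm (\<Sum>k\<in>{N..<m}. coord e k x *\<^sub>R e k) < \<delta>" for m
      using bound[of m] by (simp only: rescale)
    have lim: "(\<lambda>m. norm ((\<Sum>k<m. coord e k x *\<^sub>R e k) - (\<Sum>k<N. coord e k x *\<^sub>R e k)))
          \<longlonglongrightarrow> norm (x - (\<Sum>k<N. coord e k x *\<^sub>R e k))"
      using coord_sums[OF assms(1), of x] unfolding sums_def by (intro tendsto_intros)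
    have "(\<Sum>k<m. coord e k x *\<^sub>R e k) - (\<Sum>k<N. coord e k x *\<^sub>R e k)
                  = (\<Sum>k\<in>{N..<m}. coord e k x *\<^sub>R e k)" if "N \<le> m" for m
      using sum.atLeastLessThan_concat[of 0 N m "\<lambda>k. coord e k x *\<^sub>R e k"] that
      by (simp add: atLeast0LessThan algebra_simps)
    then have "norm ((\<Sum>k<m. coord e k x *\<^sub>R e k) - (\<Sum>k<N. coord e k x *\<^sub>R e k)) \<le> \<delta>"
      if "N \<le> m" for m
      using tail[of m] that by simp
    then show ?thesis
      by (intro LIMSEQ_le_const2[OF lim]) blast
  qed
  then show ?thesis by blast
qed

lemma precompact_iff_finite_cball_cover:
  "precompact A \<longleftrightarrow> (\<forall>\<delta>>0. \<exists>F. finite F \<and> A \<subseteq> (\<Union>y\<in>F. cball y \<delta>))"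
proof
  assume "precompact A"
  then show "\<forall>\<delta>>0. \<exists>F. finite F \<and> A \<subseteq> (\<Union>y\<in>F. cball y \<delta>)"
    unfolding precompact_def by blast
next
  assume cover: "\<forall>\<delta>>0. \<exists>F. finite F \<and> A \<subseteq> (\<Union>y\<in>F. cball y \<delta>)"
  show "precompact A"
    unfolding precompact_def
  proof (intro allI impI)
    fix r :: real
    assume "r > 0"
    then obtain F where "finite F" and F: "A \<subseteq> (\<Union>y\<in>F. cball y (r / 2))"
      using cover half_gt_zero by blast
    text \<open>Move each centre whose ball meets \<open>A\<close> into \<open>A\<close>, at the price of doubling the radius.\<close>
    define G where "G = {y \<in> F. A \<inter> cball y (r / 2) \<noteq> {}}"
    have "\<forall>y\<in>G. \<exists>x. x \<in> A \<inter> cball y (r / 2)"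
      by (auto simp: G_def)
    then obtain a where a: "\<And>y. y \<in> G \<Longrightarrow> a y \<in> A \<inter> cball y (r / 2)"
      by metis
    show "\<exists>F'. finite F' \<and> F' \<subseteq> A \<and> A \<subseteq> (\<Union>x\<in>F'. cball x r)"
    proof (intro exI conjI)
      show "finite (a ` G)"
        using \<open>finite F\<close> by (simp add: G_def)
      show "a ` G \<subseteq> A"
        using a by auto
      show "A \<subseteq> (\<Union>x\<in>a ` G. cball x r)"
      proof
        fix x
        assume "x \<in> A"
        then obtain y where "y \<in> F" and "dist y x \<le> r / 2"
          using F by auto
        with \<open>x \<in> A\<close> have "y \<in> G"
          by (auto simp: G_def)
        have "dist (a y) x \<le> dist (a y) y + dist y x"
          by (rule dist_triangle)
        also have "\<dots> \<le> r"
          using a[OF \<open>y \<in> G\<close>] \<open>dist y x \<le> r / 2\<close> by (simp add: dist_commute)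
        finally show "x \<in> (\<Union>x\<in>a ` G. cball x r)"
          using \<open>y \<in> G\<close> by auto
      qed
    qed
  qed
qed

lemma precompact_subset:
  assumes "precompact B" and "A \<subseteq> B"
  shows "precompact A"
  unfolding precompact_iff_finite_cball_cover
proof (intro allI impI)
  fix \<delta> :: real
  assume "\<delta> > 0"
  then obtain F where "finite F" and "B \<subseteq> (\<Union>y\<in>F. cball y \<delta>)"
    using assms(1) unfolding precompact_iff_finite_cball_cover by blast
  with assms(2) show "\<exists>F. finite F \<and> A \<subseteq> (\<Union>y\<in>F. cball y \<delta>)"
    by blast
qed

lemma abs_sub_round_down_le:
  fixes t \<eta> :: real
  assumes "\<eta> > 0"
  shows "\<bar>t - \<eta> * \<lfloor>t / \<eta>\<rfloor>\<bar> \<le> \<eta>"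
proof -
  have "\<eta> * \<lfloor>t / \<eta>\<rfloor> \<le> \<eta> * (t / \<eta>)"
    using assms by (intro mult_left_mono) auto
  moreover have "\<eta> * (t / \<eta>) < \<eta> * (\<lfloor>t / \<eta>\<rfloor> + 1)"
    using assms by (intro mult_strict_left_mono) auto
  ultimately show ?thesis
    using assms by (simp add: algebra_simps)
qed

lemma norm_partial_sum_sub_round_down_le:
  fixes e :: "nat \<Rightarrow> 'a::real_normed_vector"
  assumes "\<And>n. norm (e n) \<le> 1" and "\<eta> > 0"
  shows "norm ((\<Sum>n<N. c n *\<^sub>R e n) - (\<Sum>n<N. (\<eta> * \<lfloor>c n / \<eta>\<rfloor>) *\<^sub>R e n)) \<le> real N * \<eta>"
proof -
  have "norm ((\<Sum>n<N. c n *\<^sub>R e n) - (\<Sum>n<N. (\<eta> * \<lfloor>c n / \<eta>\<rfloor>) *\<^sub>R e n))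
        = norm (\<Sum>n<N. (c n - \<eta> * \<lfloor>c n / \<eta>\<rfloor>) *\<^sub>R e n)"
    by (simp add: scaleR_diff_left sum_subtractf)
  also have "\<dots> \<le> (\<Sum>n<N. \<bar>c n - \<eta> * \<lfloor>c n / \<eta>\<rfloor>\<bar> * norm (e n))"
    by (rule order_trans[OF norm_sum]) simp
  also have "\<dots> \<le> (\<Sum>n<N. \<eta>)"
  proof (rule sum_mono)
    fix n
    have "\<bar>c n - \<eta> * \<lfloor>c n / \<eta>\<rfloor>\<bar> * norm (e n) \<le> \<eta> * 1"
      using assms abs_sub_round_down_le[OF \<open>\<eta> > 0\<close>] by (intro mult_mono) auto
    then show "\<bar>c n - \<eta> * \<lfloor>c n / \<eta>\<rfloor>\<bar> * norm (e n) \<le> \<eta>"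
      by simp
  qed
  finally show ?thesis
    by simp
qed

lemma finite_rounded_partial_sums_brick:
  assumes "\<eta> > 0"
  shows "finite ((\<lambda>x. \<Sum>n<N. (\<eta> * \<lfloor>coord e n x / \<eta>\<rfloor>) *\<^sub>R e n) ` brick e \<epsilon>)"
proof -
  define g where "g k = (\<Sum>n<N. (\<eta> * of_int (k n)) *\<^sub>R e n)" for k :: "nat \<Rightarrow> int"
  define K where "K = (\<Pi>\<^sub>E n\<in>{..<N}. {\<lfloor>- \<epsilon> n / \<eta>\<rfloor>..\<lfloor>\<epsilon> n / \<eta>\<rfloor>})"
  have "(\<Sum>n<N. (\<eta> * \<lfloor>coord e n x / \<eta>\<rfloor>) *\<^sub>R e n) \<in> g ` K" if "x \<in> brick e \<epsilon>" for x
  proof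
    have "\<bar>coord e n x\<bar> \<le> \<epsilon> n" for n
      using that by (simp add: brick_def)
    then have "- \<epsilon> n \<le> coord e n x" "coord e n x \<le> \<epsilon> n" for n
      using abs_le_D1 abs_le_D2 minus_le_iff by blast+
    then have "\<lfloor>- \<epsilon> n / \<eta>\<rfloor> \<le> \<lfloor>coord e n x / \<eta>\<rfloor>" "\<lfloor>coord e n x / \<eta>\<rfloor> \<le> \<lfloor>\<epsilon> n / \<eta>\<rfloor>" for n
      using \<open>\<eta> > 0\<close> by (intro floor_mono divide_right_mono; simp)+
    then show "(\<lambda>n\<in>{..<N}. \<lfloor>coord e n x / \<eta>\<rfloor>) \<in> K"
      by (simp add: K_def)
  qed (simp add: g_def)
  then show ?thesis
    by (rule finite_subset[OF image_subsetI]) (simp_all add: K_def finite_PiE finite_imageI)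
qed

lemma precompact_brick:
  assumes "normalized_schauder_basis e" and "r_unc e \<epsilon> < \<infinity>"
  shows "precompact (brick e \<epsilon>)"
  unfolding precompact_iff_finite_cball_cover
proof (intro allI impI)
  fix \<delta> :: real
  assume "\<delta> > 0"
  have basis: "schauder_basis e" and unit: "\<And>n. norm (e n) \<le> 1"
    using assms(1) unfolding normalized_schauder_basis_def by auto
  obtain N where N: "\<forall>x\<in>brick e \<epsilon>. norm (x - (\<Sum>n<N. coord e n x *\<^sub>R e n)) \<le> \<delta> / 2"
    using brick_uniform_tail[OF basis assms(2), of "\<delta> / 2"] \<open>\<delta> > 0\<close> by auto
  define \<eta> where "\<eta> = \<delta> / (2 * (real N + 1))"
  have "\<eta> > 0"
    using \<open>\<delta> > 0\<close> by (simp add: \<eta>_def)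
  have "real N * \<eta> \<le> \<delta> / 2"
    using \<open>\<delta> > 0\<close> by (simp add: \<eta>_def field_simps)
  define rounded where "rounded x = (\<Sum>n<N. (\<eta> * \<lfloor>coord e n x / \<eta>\<rfloor>) *\<^sub>R e n)" for x
  have "dist (rounded x) x \<le> \<delta>" if x: "x \<in> brick e \<epsilon>" for x
  proof -
    have "dist (\<Sum>n<N. coord e n x *\<^sub>R e n) (rounded x) \<le> \<delta> / 2"
      using norm_partial_sum_sub_round_down_le[of e \<eta> "\<lambda>n. coord e n x" N] unit \<open>\<eta> > 0\<close>
        \<open>real N * \<eta> \<le> \<delta> / 2\<close>
      by (simp add: rounded_def dist_norm)
    moreover have "dist x (\<Sum>n<N. coord e n x *\<^sub>R e n) \<le> \<delta> / 2"
      using N x by (simp add: dist_norm)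
    ultimately show ?thesis
      using dist_triangle[of x "rounded x" "\<Sum>n<N. coord e n x *\<^sub>R e n"] by (simp add: dist_commute)
  qed
  then have "brick e \<epsilon> \<subseteq> (\<Union>y\<in>rounded ` brick e \<epsilon>. cball y \<delta>)"
    by force
  moreover have "finite (rounded ` brick e \<epsilon>)"
    unfolding rounded_def using \<open>\<eta> > 0\<close> by (rule finite_rounded_partial_sums_brick)
  ultimately show "\<exists>F. finite F \<and> brick e \<epsilon> \<subseteq> (\<Union>y\<in>F. cball y \<delta>)"
    by blast
qed

theorem proposition4p3:
  fixes A :: "'a::banach set"
  assumes "entropy A < \<infinity>"
  shows "precompact A"
proof -
  obtain e \<epsilon> where "normalized_schauder_basis e" and "A \<subseteq> brick e \<epsilon>" and "r_unc e \<epsilon> < \<infinity>"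
    using assms unfolding entropy_def INF_less_iff by auto
  then show ?thesis
    using precompact_brick precompact_subset by blast
qed

end
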